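(* It holds that \[ \mathscr{A}(\mathbb{R}^3\otimes\mathbb{R}^3\otimes\mathbb{R}^3)=\mathscr{A}(\mathrm{Sym}^3(\mathbb{R}^3))=\frac{1}{\sqrt{\max_{A\in\mathbb{R}^3\otimes\mathbb{R}^3\otimes\mathbb{R}^3}\operatorname{rk}_\perp(A)}}=\frac{1}{\sqrt7}. \] Moreover, the symmetric tensor associated with the Chebyshev cubic $\mathrm{Ch}_{3,3}(x)=x_1^3-3x_1(x_2^2+x_3^2)$ is extremal, both in $\mathbb{R}^3\otimes\mathbb{R}^3\otimes\mathbb{R}^3$ and in $\mathrm{Sym}^3(\mathbb{R}^3)$.
   Context: Tensors and their norms: \begin{itemize} \item The Frobenius inner product on real $(n_1,\dots,n_d)$-tensors is $\langle A,A'\rangle_F=\sum a_{i_1\dots i_d}a'_{i_1\dots i_d}$, with norm $\|A\|_F$. \item A rank-one tensor is a nonzero $x^{(1)}\otimes\cdots\otimes x^{(d)}$. \item The spectral norm is $\|A\|_2=\max_{\|x^{(j)}\|=1}\langle A,x^{(1)}\otimes\cdots\otimes x^{(d)}\rangle_F$. \end{itemize} Best rank-one approximation ratio: \begin{itemize} \item For a linear subspace $V$ of the tensor space (either the full tensor space or the space $\mathrm{Sym}^d(\mathbb{R}^n)$ of symmetric $n^d$-tensors), $\mathscr{A}(V)=\min_{0\neq A\in V}\|A\|_2/\|A\|_F$. \item A nonzero $A\in V$ is called extremal (in $V$) if $\|A\|_2/\|A\|_F=\mathscr{A}(V)$. \end{itemize} Orthogonal rank: $\operatorname{rk}_\perp(A)$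 is the smallest $r$ with $A=Y_1+\dots+Y_r$, where the $Y_\ell$ are rank-one tensors that are pairwise orthogonal in $\langle\cdot,\cdot\rangle_F$. The symmetric tensor $A$ associated with a form $p\in P_{d,n}$ is the unique symmetric tensor with $p(x)=\langle A,x\otimes\cdots\otimes x\rangle_F$. *)

theory Defs
  imports "HOL-Analysis.Analysis"
begin

type_synonym tensor3 = "3 \<Rightarrow> 3 \<Rightarrow> 3 \<Rightarrow> real"

definition frob_inner :: "tensor3 \<Rightarrow> tensor3 \<Rightarrow> real" where
  "frob_inner A B = (\<Sum>i\<in>UNIV. \<Sum>j\<in>UNIV. \<Sum>k\<in>UNIV. A i j k * B i j k)"

definition frob_norm :: "tensor3 \<Rightarrow> real" where
  "frob_norm A = sqrt (frob_inner A A)"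

definition outer3 :: "real^3 \<Rightarrow> real^3 \<Rightarrow> real^3 \<Rightarrow> tensor3" where
  "outer3 x y z = (\<lambda>i j k. x$i * y$j * z$k)"

definition rank_one :: "tensor3 \<Rightarrow> bool" where
  "rank_one A \<longleftrightarrow> (\<exists>x y z. A = outer3 x y z \<and> A \<noteq> (\<lambda>i j k. 0))"

text \<open>Spectral norm: max over unit vectors (written as a supremum; the maximum is attained).\<close>
definition spec_norm :: "tensor3 \<Rightarrow> real" where
  "spec_norm A = Sup {frob_inner A (outer3 x y z) | x y z. norm x = 1 \<and> norm y = 1 \<and> norm z = 1}"

definition sym_tensors :: "tensor3 set" where
  "sym_tensors = {A. \<forall>i j k. A i j k = A j i k \<and> A i j k = A i k j}"

definition approx_ratio :: "tensor3 set \<Rightarrow> real" where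
  "approx_ratio V = Inf {spec_norm A / frob_norm A | A. A \<in> V \<and> A \<noteq> (\<lambda>i j k. 0)}"

definition extremal_in :: "tensor3 set \<Rightarrow> tensor3 \<Rightarrow> bool" where
  "extremal_in V A \<longleftrightarrow> A \<in> V \<and> A \<noteq> (\<lambda>i j k. 0) \<and> spec_norm A / frob_norm A = approx_ratio V"

definition orth_rank :: "tensor3 \<Rightarrow> nat" where
  "orth_rank A = (LEAST r. \<exists>Y :: nat \<Rightarrow> tensor3.
      (\<forall>l<r. rank_one (Y l)) \<and> (\<forall>l<r. \<forall>m<r. l \<noteq> m \<longrightarrow> frob_inner (Y l) (Y m) = 0)
      \<and> A = (\<lambda>i j k. \<Sum>l<r. Y l i j k))"

definition assoc_sym_tensor :: "(real^3 \<Rightarrow> real) \<Rightarrow> tensor3" where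
  "assoc_sym_tensor p = (THE A. A \<in> sym_tensors \<and> (\<forall>x. p x = frob_inner A (outer3 x x x)))"

definition chebyshev33 :: "real^3 \<Rightarrow> real" where
  "chebyshev33 x = (x$1)^3 - 3 * x$1 * ((x$2)^2 + (x$3)^2)"

end

theory Submission
  imports Defs
begin

text \<open>
  If \<open>A = Y\<^sub>1 + \<dots> + Y\<^sub>r\<close> with pairwise orthogonal rank-one \<open>Y\<^sub>l\<close>, then
  \<open>\<langle>A, Y\<^sub>l\<rangle> = \<parallel>Y\<^sub>l\<parallel>\<^sup>2 \<le> \<parallel>A\<parallel>\<^sub>2 \<parallel>Y\<^sub>l\<parallel>\<close>, so \<open>\<parallel>A\<parallel>\<^sup>2 = \<Sum> \<parallel>Y\<^sub>l\<parallel>\<^sup>2 \<le> r \<parallel>A\<parallel>\<^sub>2\<^sup>2\<close>: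
  the ratio \<open>\<parallel>A\<parallel>\<^sub>2 / \<parallel>A\<parallel>\<close> is at least \<open>1 / \<surd>rk\<^sub>\<perp>(A)\<close>.
  Every \<open>3\<times>3\<times>3\<close> tensor has orthogonal rank at most 7. The slice \<open>A(y,\<cdot>,\<cdot>)\<close> is
  linear in \<open>y\<close>, so its determinant is an odd function of \<open>y\<close> and vanishes somewhere on
  every great circle; this yields an orthonormal frame \<open>x\<^sub>1, x\<^sub>2, x\<^sub>3\<close> with two
  singular slices. Writing \<open>A = \<Sum>\<^sub>l x\<^sub>l \<otimes> A(x\<^sub>l,\<cdot>,\<cdot>)\<close> and expanding each slice in an orthonormal basis,
  chosen to contain a kernel vector for the two singular ones, gives \<open>3 + 2 + 2\<close> orthogonal
  rank-one terms. The Chebyshev tensor attains the resulting bound \<open>1/\<surd>7\<close>: its Frobenius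
  norm is \<open>\<surd>7\<close>, and its spectral norm is 1 by a sum-of-squares identity.
\<close>

section \<open>Frobenius inner product and spectral norm\<close>

lemma frob_inner_commute: "frob_inner A B = frob_inner B A"
  unfolding frob_inner_def by (simp add: mult.commute)

lemma frob_inner_outer3:
  "frob_inner (outer3 x y z) (outer3 x' y' z') = (x \<bullet> x') * (y \<bullet> y') * (z \<bullet> z')"
  unfolding frob_inner_def outer3_def inner_vec_def by (simp add: sum_3 algebra_simps)

lemma frob_inner_sum_left:
  "frob_inner (\<lambda>i j k. \<Sum>m\<in>I. Y m i j k) B = (\<Sum>m\<in>I. frob_inner (Y m) B)"
  unfolding frob_inner_def by (simp add: sum_distrib_right sum.swap[where A = I])

lemma frob_inner_diff_left:
  "frob_inner (\<lambda>i j k. A i j k - B i j k) C = frob_inner A C - frob_inner B C"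
  unfolding frob_inner_def by (simp add: left_diff_distrib sum_subtractf)

lemma frob_inner_scale_right: "frob_inner A (\<lambda>i j k. c * B i j k) = c * frob_inner A B"
  unfolding frob_inner_def by (simp add: sum_distrib_left algebra_simps)

lemma frob_inner_eq_sum_triples:
  "frob_inner A B = (\<Sum>(i, j, k)\<in>UNIV. A i j k * B i j k)"
  unfolding frob_inner_def
  by (simp add: sum.cartesian_product' UNIV_Times_UNIV[symmetric] case_prod_beta
      del: UNIV_Times_UNIV)

lemma frob_inner_self_nonneg: "0 \<le> frob_inner A A"
  unfolding frob_inner_def by (intro sum_nonneg) auto

lemma frob_norm_nonneg: "0 \<le> frob_norm A"
  by (simp add: frob_norm_def frob_inner_self_nonneg)

lemma frob_inner_Cauchy_Schwarz: "frob_inner A B \<le> frob_norm A * frob_norm B"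
proof -
  have "(frob_inner A B)\<^sup>2 \<le> frob_inner A A * frob_inner B B"
    unfolding frob_inner_eq_sum_triples case_prod_beta
    using Cauchy_Schwarz_ineq_sum by (simp add: power2_eq_square)
  then have "\<bar>frob_inner A B\<bar> \<le> sqrt (frob_inner A A * frob_inner B B)"
    by (simp add: real_le_rsqrt)
  then show ?thesis unfolding frob_norm_def by (simp add: real_sqrt_mult)
qed

lemma frob_norm_outer3: "frob_norm (outer3 x y z) = norm x * norm y * norm z"
  unfolding frob_norm_def frob_inner_outer3
  by (simp add: dot_square_norm real_sqrt_mult)

lemma frob_norm_pos:
  assumes "A \<noteq> (\<lambda>i j k. 0)"
  shows "0 < frob_norm A"
proof -
  have "frob_inner A A \<noteq> 0"
  proof
    assume "frob_inner A A = 0"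
    then have "\<forall>(i, j, k)\<in>UNIV. A i j k * A i j k = 0"
      unfolding frob_inner_eq_sum_triples by (subst (asm) sum_nonneg_eq_0_iff) auto
    then show False using assms by (auto simp: fun_eq_iff)
  qed
  then show ?thesis using frob_inner_self_nonneg[of A] by (simp add: frob_norm_def)
qed

lemma spec_norm_values_bdd:
  "bdd_above {frob_inner A (outer3 x y z) | x y z. norm x = 1 \<and> norm y = 1 \<and> norm z = 1}"
  by (rule bdd_aboveI[of _ "frob_norm A"])
    (auto intro: order_trans[OF frob_inner_Cauchy_Schwarz] simp: frob_norm_outer3)

lemma spec_norm_ge:
  "norm x = 1 \<Longrightarrow> norm y = 1 \<Longrightarrow> norm z = 1 \<Longrightarrow> frob_inner A (outer3 x y z) \<le> spec_norm A"
  unfolding spec_norm_def by (rule cSup_upper[OF _ spec_norm_values_bdd]) blast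

lemma spec_norm_le:
  assumes "\<And>x y z. norm x = 1 \<Longrightarrow> norm y = 1 \<Longrightarrow> norm z = 1 \<Longrightarrow> frob_inner A (outer3 x y z) \<le> c"
  shows "spec_norm A \<le> c"
proof -
  have "norm (axis 1 1 :: real^3) = 1" by simp
  then show ?thesis
    unfolding spec_norm_def using assms by (intro cSup_least) blast+
qed

lemma spec_norm_nonneg: "0 \<le> spec_norm A"
proof -
  let ?e = "axis 1 1 :: real^3"
  have "frob_inner A (outer3 (- ?e) ?e ?e) = - frob_inner A (outer3 ?e ?e ?e)"
    by (simp add: frob_inner_def outer3_def sum_negf)
  moreover have "frob_inner A (outer3 ?e ?e ?e) \<le> spec_norm A"
    and "frob_inner A (outer3 (- ?e) ?e ?e) \<le> spec_norm A"
    by (auto intro: spec_norm_ge)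
  ultimately show ?thesis by linarith
qed

lemma frob_inner_outer3_le_spec_norm:
  "frob_inner A (outer3 x y z) \<le> spec_norm A * frob_norm (outer3 x y z)"
proof (cases "x = 0 \<or> y = 0 \<or> z = 0")
  case True
  then have "frob_inner A (outer3 x y z) = 0" by (auto simp: frob_inner_def outer3_def)
  with True show ?thesis by (auto simp: frob_norm_outer3)
next
  case False
  let ?c = "norm x * norm y * norm z"
  have "outer3 x y z = (\<lambda>i j k. ?c * outer3 (x /\<^sub>R norm x) (y /\<^sub>R norm y) (z /\<^sub>R norm z) i j k)"
    using False by (simp add: outer3_def fun_eq_iff field_simps)
  then have "frob_inner A (outer3 x y z)
      = ?c * frob_inner A (outer3 (x /\<^sub>R norm x) (y /\<^sub>R norm y) (z /\<^sub>R norm z))"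
    by (metis frob_inner_scale_right)
  also have "\<dots> \<le> ?c * spec_norm A"
    using False by (intro mult_left_mono spec_norm_ge) auto
  finally show ?thesis by (simp add: frob_norm_outer3 mult.commute)
qed

section \<open>Orthogonal decompositions\<close>

definition orth_decomp :: "tensor3 \<Rightarrow> nat \<Rightarrow> (nat \<Rightarrow> tensor3) \<Rightarrow> bool" where
  "orth_decomp A r Y \<longleftrightarrow> (\<forall>l<r. rank_one (Y l))
      \<and> (\<forall>l<r. \<forall>m<r. l \<noteq> m \<longrightarrow> frob_inner (Y l) (Y m) = 0)
      \<and> A = (\<lambda>i j k. \<Sum>l<r. Y l i j k)"

lemma orth_rank_le: "orth_decomp A r Y \<Longrightarrow> orth_rank A \<le> r"
  unfolding orth_rank_def orth_decomp_def[symmetric] by (rule Least_le) blast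

lemma orth_decomp_orth_rank: "orth_decomp A r Y \<Longrightarrow> \<exists>Y. orth_decomp A (orth_rank A) Y"
  unfolding orth_rank_def orth_decomp_def[symmetric] by (rule LeastI_ex) blast

lemma orth_decomp_of_family:
  fixes T :: "'i \<Rightarrow> tensor3"
  assumes "finite I" and "\<And>p. p \<in> I \<Longrightarrow> \<exists>x y z. T p = outer3 x y z"
    and "\<And>p q. p \<in> I \<Longrightarrow> q \<in> I \<Longrightarrow> p \<noteq> q \<Longrightarrow> frob_inner (T p) (T q) = 0"
    and "A = (\<lambda>i j k. \<Sum>p\<in>I. T p i j k)"
  shows "\<exists>Y. orth_decomp A (card {p\<in>I. T p \<noteq> (\<lambda>i j k. 0)}) Y"
proof -
  define J where "J = {p\<in>I. T p \<noteq> (\<lambda>i j k. 0)}"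
  obtain h where h: "bij_betw h {..<card J} J"
    using ex_bij_betw_nat_finite[of J] \<open>finite I\<close> by (auto simp: J_def atLeast0LessThan)
  then have hJ: "l < card J \<Longrightarrow> h l \<in> J" for l by (auto dest: bij_betwE)
  have "(\<Sum>l<card J. T (h l) i j k) = (\<Sum>p\<in>I. T p i j k)" for i j k
  proof -
    have "(\<Sum>l<card J. T (h l) i j k) = (\<Sum>p\<in>J. T p i j k)"
      using sum.reindex_bij_betw[OF h] .
    also have "\<dots> = (\<Sum>p\<in>I. T p i j k)"
      using \<open>finite I\<close> by (intro sum.mono_neutral_left) (auto simp: J_def)
    finally show ?thesis .
  qed
  moreover have "h l \<noteq> h m" if "l < card J" "m < card J" "l \<noteq> m" for l m
    using h that by (auto simp: bij_betw_def inj_on_def)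
  ultimately have "orth_decomp A (card J) (\<lambda>l. T (h l))"
    using assms hJ unfolding orth_decomp_def rank_one_def J_def by fastforce
  then show ?thesis unfolding J_def by blast
qed

lemma frob_norm_le_orth_decomp:
  assumes "orth_decomp A r Y"
  shows "frob_norm A \<le> sqrt (real r) * spec_norm A"
proof -
  define n where "n l = frob_inner (Y l) (Y l)" for l
  have A: "A = (\<lambda>i j k. \<Sum>l<r. Y l i j k)" using assms by (simp add: orth_decomp_def)
  have inner_A: "frob_inner A (Y l) = n l" if "l < r" for l
  proof -
    have "frob_inner A (Y l) = (\<Sum>m<r. frob_inner (Y m) (Y l))"
      unfolding A frob_inner_sum_left ..
    also have "\<dots> = (\<Sum>m\<in>{l}. frob_inner (Y m) (Y l))"
      using assms that by (intro sum.mono_neutral_right) (auto simp: orth_decomp_def)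
    finally show ?thesis by (simp add: n_def)
  qed
  have "frob_inner A A = (\<Sum>l<r. frob_inner A (Y l))"
    by (subst (2) A, subst frob_inner_commute) (simp add: frob_inner_sum_left frob_inner_commute)
  then have norm_A: "frob_inner A A = (\<Sum>l<r. n l)" by (simp add: inner_A)
  have n_le: "n l \<le> (spec_norm A)\<^sup>2" if l: "l < r" for l
  proof -
    obtain x y z where Y: "Y l = outer3 x y z"
      using assms l by (auto simp: orth_decomp_def rank_one_def)
    have "frob_norm (Y l) * frob_norm (Y l) \<le> spec_norm A * frob_norm (Y l)"
      using frob_inner_outer3_le_spec_norm[of A x y z] inner_A[OF l]
      by (simp add: Y frob_norm_def n_def frob_inner_self_nonneg)
    then have "frob_norm (Y l) \<le> spec_norm A"
      using spec_norm_nonneg[of A] frob_norm_nonneg[of "Y l"]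
      by (cases "frob_norm (Y l) = 0") (auto intro: mult_right_le_imp_le)
    from power_mono[OF this frob_norm_nonneg, of 2] show ?thesis
      by (simp add: frob_norm_def n_def frob_inner_self_nonneg)
  qed
  have "frob_norm A = sqrt (\<Sum>l<r. n l)" by (simp add: frob_norm_def norm_A)
  also have "\<dots> \<le> sqrt (real r * (spec_norm A)\<^sup>2)"
    using sum_bounded_above[of "{..<r}" n] n_le by simp
  also have "\<dots> = sqrt (real r) * spec_norm A"
    by (simp add: real_sqrt_mult spec_norm_nonneg)
  finally show ?thesis .
qed

section \<open>Orthogonal rank at most 7\<close>

definition slice :: "tensor3 \<Rightarrow> real^3 \<Rightarrow> real^3^3" where
  "slice A y = (\<chi> j k. \<Sum>i\<in>UNIV. y$i * A i j k)"

lemma slice_entry: "slice A y $ j $ k = y$1 * A 1 j k + y$2 * A 2 j k + y$3 * A 3 j k"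
  by (simp add: slice_def sum_3)

definition rotation12 :: "real \<Rightarrow> real^3^3" where
  "rotation12 t = vector [vector [cos t, - sin t, 0], vector [sin t, cos t, 0], vector [0, 0, 1]]"

lemma rotation12_entries: "rotation12 t $ i $ j =
  (if i = 3 \<or> j = 3 then (if i = j then 1 else 0)
   else if i = j then cos t else if i = 1 then - sin t else sin t)"
  using exhaust_3[of i] exhaust_3[of j] by (auto simp: rotation12_def)

lemma orthogonal_matrix_rotation12: "orthogonal_matrix (rotation12 t)"
  unfolding orthogonal_matrix_orthonormal_columns
  by (simp add: rotation12_def column_def norm_eq_1 orthogonal_def inner_vec_def sum_3 forall_3
      vector_3 power2_eq_square[symmetric] algebra_simps)

lemma column_mult_rotation12:
  "column 1 (Q ** rotation12 t) = cos t *\<^sub>R column 1 Q + sin t *\<^sub>R column 2 Q"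
  "column 3 (Q ** rotation12 t) = column 3 Q"
  by (simp_all add: rotation12_entries column_def matrix_matrix_mult_def vec_eq_iff sum_3
      mult.commute)

lemma inner_columns_orthogonal_matrix:
  "orthogonal_matrix Q \<Longrightarrow> column l Q \<bullet> column m Q = (if l = m then 1 else 0)"
  for Q :: "real^'n^'n"
  by (auto simp: orthogonal_matrix_orthonormal_columns orthogonal_def norm_eq_1)

lemma orthogonal_matrix_rows_inner:
  "orthogonal_matrix Q \<Longrightarrow> (\<Sum>l\<in>UNIV. Q$i$l * Q$j$l) = (if i = j then 1 else 0)"
  for Q :: "real^'n^'n"
  unfolding orthogonal_matrix_def
  by (drule conjunct2, drule arg_cong[where f = "\<lambda>M. M$i$j"])
    (simp add: matrix_matrix_mult_def transpose_def mat_def)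

lemma exists_singular_slice_on_circle:
  "\<exists>t. det (slice A (cos t *\<^sub>R u + sin t *\<^sub>R v)) = 0"
proof -
  define h where "h t = det (slice A (cos t *\<^sub>R u + sin t *\<^sub>R v))" for t
  have "continuous_on {0..pi} h"
    unfolding h_def det_3 slice_entry by (intro continuous_intros)
  moreover have "h pi = - h 0"
  proof -
    have "slice A (- u) = - slice A u" by (simp add: slice_def vec_eq_iff sum_negf)
    moreover have "det (- M) = - det M" for M :: "real^3^3" by (simp add: det_3 algebra_simps)
    ultimately show ?thesis by (simp add: h_def)
  qed
  ultimately have "\<exists>t\<in>{0..pi}. h t = 0"
    using IVT'[of h 0 0 pi] IVT2'[of h pi 0 0] by (cases "h 0 \<le> 0") auto
  then show ?thesis unfolding h_def by blast
qed

lemma exists_rotation12_singular_slice: "\<exists>t. det (slice A (column 1 (Q ** rotation12 t))) = 0"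
  unfolding column_mult_rotation12 by (rule exists_singular_slice_on_circle)

lemma exists_frame_singular_slices:
  "\<exists>X. orthogonal_matrix X \<and> det (slice A (column 1 X)) = 0 \<and> det (slice A (column 3 X)) = 0"
proof -
  obtain t where "det (slice A (column 1 (mat 1 ** rotation12 t))) = 0"
    using exists_rotation12_singular_slice by blast
  then have t: "det (slice A (column 1 (rotation12 t))) = 0" by (simp add: matrix_mul_lid)
  have "norm (column 1 (rotation12 t)) = 1"
    using inner_columns_orthogonal_matrix[OF orthogonal_matrix_rotation12[of t], of 1 1]
    by (simp add: norm_eq_1)
  then obtain Q where Q: "orthogonal_matrix Q" "Q *v axis 3 1 = column 1 (rotation12 t)"
    using orthogonal_matrix_exists_basis by blast
  obtain s where s: "det (slice A (column 1 (Q ** rotation12 s))) = 0"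
    using exists_rotation12_singular_slice by blast
  have "orthogonal_matrix (Q ** rotation12 s)"
    by (intro orthogonal_matrix_mul Q(1) orthogonal_matrix_rotation12)
  moreover have "column 3 (Q ** rotation12 s) = column 1 (rotation12 t)"
    using Q(2) by (simp add: column_mult_rotation12(2) matrix_vector_mult_basis)
  ultimately show ?thesis using s t by auto
qed

lemma singular_matrix_kernel_column:
  fixes M :: "real^'n^'n"
  assumes "det M = 0"
  obtains P where "orthogonal_matrix P" "M *v column k P = 0"
proof -
  obtain x where x: "M *v x = 0" "x \<noteq> 0"
    using assms invertible_det_nz invertible_left_inverse matrix_left_invertible_ker by metis
  then have "norm (x /\<^sub>R norm x) = 1" by simp
  then obtain P where P: "orthogonal_matrix P" "P *v axis k 1 = x /\<^sub>R norm x"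
    using orthogonal_matrix_exists_basis by blast
  then have "M *v column k P = 0"
    using x by (simp add: matrix_vector_mult_basis[symmetric] matrix_vector_mult_scaleR)
  with P(1) show ?thesis by (rule that)
qed

lemma matrix_eq_sum_over_orthonormal_columns:
  fixes Q :: "real^'n^'n" and M :: "real^'n^'m"
  assumes "orthogonal_matrix Q"
  shows "(\<Sum>m\<in>UNIV. (M *v column m Q)$j * column m Q $ k) = M$j$k"
proof -
  have "(\<Sum>m\<in>UNIV. (M *v column m Q)$j * column m Q $ k)
      = (\<Sum>m\<in>UNIV. \<Sum>k'\<in>UNIV. M$j$k' * (Q$k'$m * Q$k$m))"
    by (simp add: matrix_vector_mult_def column_def sum_distrib_right mult.assoc)
  also have "\<dots> = (\<Sum>k'\<in>UNIV. M$j$k' * (\<Sum>m\<in>UNIV. Q$k'$m * Q$k$m))"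
    by (subst sum.swap) (simp add: sum_distrib_left)
  also have "\<dots> = M$j$k"
    by (simp add: orthogonal_matrix_rows_inner[OF assms] if_distrib if_distribR cong: if_cong)
  finally show ?thesis .
qed

lemma tensor_eq_sum_over_orthonormal_slices:
  fixes X :: "real^3^3"
  assumes "orthogonal_matrix X"
  shows "(\<Sum>l\<in>UNIV. column l X $ i * slice A (column l X) $ j $ k) = A i j k"
proof -
  have "(\<Sum>l\<in>UNIV. column l X $ i * slice A (column l X) $ j $ k)
      = (\<Sum>l\<in>UNIV. \<Sum>i'\<in>UNIV. (X$i$l * X$i'$l) * A i' j k)"
    by (simp add: slice_def column_def sum_distrib_left mult.assoc)
  also have "\<dots> = (\<Sum>i'\<in>UNIV. (\<Sum>l\<in>UNIV. X$i$l * X$i'$l) * A i' j k)"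
    by (subst sum.swap) (simp add: sum_distrib_right)
  also have "\<dots> = A i j k"
    by (simp add: orthogonal_matrix_rows_inner[OF assms] if_distrib if_distribR cong: if_cong)
  finally show ?thesis .
qed

definition frame_term :: "tensor3 \<Rightarrow> real^3^3 \<Rightarrow> (3 \<Rightarrow> real^3^3) \<Rightarrow> 3 \<times> 3 \<Rightarrow> tensor3" where
  "frame_term A X P p = (let x = column (fst p) X; b = column (snd p) (P (fst p))
     in outer3 x (slice A x *v b) b)"

lemma frame_term_orthogonal:
  assumes "orthogonal_matrix X" "\<And>l. orthogonal_matrix (P l)" "p \<noteq> q"
  shows "frob_inner (frame_term A X P p) (frame_term A X P q) = 0"
proof (cases "fst p = fst q")
  case True
  with assms(3) have "column (snd p) (P (fst p)) \<bullet> column (snd q) (P (fst q)) = 0"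
    using inner_columns_orthogonal_matrix[OF assms(2)] by (auto simp: prod_eq_iff)
  then show ?thesis by (simp add: frame_term_def Let_def frob_inner_outer3)
next
  case False
  then have "column (fst p) X \<bullet> column (fst q) X = 0"
    using inner_columns_orthogonal_matrix[OF assms(1)] by simp
  then show ?thesis by (simp add: frame_term_def Let_def frob_inner_outer3)
qed

lemma tensor_eq_sum_frame_terms:
  assumes "orthogonal_matrix X" "\<And>l. orthogonal_matrix (P l)"
  shows "A = (\<lambda>i j k. \<Sum>p\<in>UNIV. frame_term A X P p i j k)"
proof (intro ext)
  fix i j k
  have "(\<Sum>p\<in>UNIV. frame_term A X P p i j k) = (\<Sum>l\<in>UNIV. \<Sum>m\<in>UNIV. frame_term A X P (l, m) i j k)"
    by (simp add: sum.cartesian_product' UNIV_Times_UNIV[symmetric] del: UNIV_Times_UNIV)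
  also have "\<dots> = (\<Sum>l\<in>UNIV. column l X $ i
      * (\<Sum>m\<in>UNIV. (slice A (column l X) *v column m (P l)) $ j * column m (P l) $ k))"
    by (simp add: frame_term_def Let_def outer3_def sum_distrib_left mult.assoc)
  also have "\<dots> = (\<Sum>l\<in>UNIV. column l X $ i * slice A (column l X) $ j $ k)"
    by (simp add: matrix_eq_sum_over_orthonormal_columns[OF assms(2)])
  also have "\<dots> = A i j k"
    by (rule tensor_eq_sum_over_orthonormal_slices[OF assms(1)])
  finally show "A i j k = (\<Sum>p\<in>UNIV. frame_term A X P p i j k)" ..
qed

lemma exists_orth_decomp_le_7: "\<exists>r Y. r \<le> 7 \<and> orth_decomp A r Y"
proof -
  obtain X where X: "orthogonal_matrix X"
    and singular: "det (slice A (column 1 X)) = 0" "det (slice A (column 3 X)) = 0"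
    using exists_frame_singular_slices by blast
  obtain P1 where P1: "orthogonal_matrix P1" "slice A (column 1 X) *v column 3 P1 = 0"
    using singular_matrix_kernel_column[OF singular(1), of 3] by blast
  obtain P3 where P3: "orthogonal_matrix P3" "slice A (column 3 X) *v column 3 P3 = 0"
    using singular_matrix_kernel_column[OF singular(2), of 3] by blast
  define P where "P l = (if l = 1 then P1 else if l = 3 then P3 else mat 1)" for l :: 3
  have P: "orthogonal_matrix (P l)" for l
    by (simp add: P_def P1(1) P3(1) orthogonal_matrix_id)
  let ?T = "frame_term A X P"
  have "\<exists>x y z. ?T p = outer3 x y z" for p
    unfolding frame_term_def Let_def by blast
  then obtain Y where Y: "orth_decomp A (card {p. ?T p \<noteq> (\<lambda>i j k. 0)}) Y"
    using orth_decomp_of_family[of UNIV ?T A] frame_term_orthogonal[of X P, OF X P]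
      tensor_eq_sum_frame_terms[of X P, OF X P] by auto
  have "?T (1, 3) = (\<lambda>i j k. 0)" "?T (3, 3) = (\<lambda>i j k. 0)"
    using P1(2) P3(2) by (simp_all add: frame_term_def Let_def P_def outer3_def)
  then have "{p. ?T p \<noteq> (\<lambda>i j k. 0)} \<subseteq> UNIV - {(1, 3), (3, 3)}" by auto
  then have "card {p. ?T p \<noteq> (\<lambda>i j k. 0)} \<le> card (UNIV - {(1::3, 3::3), (3, 3)})"
    by (intro card_mono) auto
  also have "\<dots> = 7" by (simp add: card_Diff_subset)
  finally show ?thesis using Y by blast
qed

lemma orth_rank_le_7: "orth_rank A \<le> 7"
  using exists_orth_decomp_le_7 orth_rank_le le_trans by metis

lemma frob_norm_le_sqrt_orth_rank: "frob_norm A \<le> sqrt (real (orth_rank A)) * spec_norm A"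
  using exists_orth_decomp_le_7 orth_decomp_orth_rank frob_norm_le_orth_decomp by metis

lemma ratio_ge_inverse_sqrt_7:
  assumes "A \<noteq> (\<lambda>i j k. 0)"
  shows "1 / sqrt 7 \<le> spec_norm A / frob_norm A"
proof -
  have "frob_norm A \<le> sqrt (real (orth_rank A)) * spec_norm A"
    by (rule frob_norm_le_sqrt_orth_rank)
  also have "\<dots> \<le> sqrt 7 * spec_norm A"
    using orth_rank_le_7[of A] spec_norm_nonneg[of A] by (intro mult_right_mono) auto
  finally show ?thesis using frob_norm_pos[OF assms] by (simp add: field_simps)
qed

section \<open>The Chebyshev tensor\<close>

lemma sym_tensor_eq_zero_if_cubic_form_zero:
  assumes "A \<in> sym_tensors" and zero: "\<And>x. frob_inner A (outer3 x x x) = 0"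
  shows "A = (\<lambda>i j k. 0)"
proof -
  have s1: "\<And>i j k. A i j k = A j i k" and s2: "\<And>i j k. A i j k = A i k j"
    using assms(1) unfolding sym_tensors_def by auto
  have canon: "A 1 2 1 = A 1 1 2" "A 1 3 1 = A 1 1 3" "A 1 3 2 = A 1 2 3" "A 2 1 1 = A 1 1 2"
    "A 2 1 2 = A 1 2 2" "A 2 1 3 = A 1 2 3" "A 2 2 1 = A 1 2 2" "A 2 3 1 = A 1 2 3"
    "A 2 3 2 = A 2 2 3" "A 3 1 1 = A 1 1 3" "A 3 1 2 = A 1 2 3" "A 3 1 3 = A 1 3 3"
    "A 3 2 1 = A 1 2 3" "A 3 2 2 = A 2 2 3" "A 3 2 3 = A 2 3 3" "A 3 3 1 = A 1 3 3"
    "A 3 3 2 = A 2 3 3"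
    by (metis s1 s2)+
  have form: "frob_inner A (outer3 (vector [a, b, c]) (vector [a, b, c]) (vector [a, b, c]))
      = A 1 1 1 * a^3 + A 2 2 2 * b^3 + A 3 3 3 * c^3 + 3 * A 1 1 2 * a^2 * b
        + 3 * A 1 1 3 * a^2 * c + 3 * A 1 2 2 * a * b^2 + 3 * A 1 3 3 * a * c^2
        + 3 * A 2 2 3 * b^2 * c + 3 * A 2 3 3 * b * c^2 + 6 * A 1 2 3 * a * b * c" for a b c
    unfolding frob_inner_def outer3_def sum_3 vector_3 canon by algebra
  have vals: "A 1 1 1 = 0" "A 2 2 2 = 0" "A 3 3 3 = 0" "A 1 1 2 = 0" "A 1 1 3 = 0" "A 1 2 2 = 0"
    "A 1 3 3 = 0" "A 2 2 3 = 0" "A 2 3 3 = 0" "A 1 2 3 = 0"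
    using zero[of "vector [1, 0, 0]"] zero[of "vector [0, 1, 0]"] zero[of "vector [0, 0, 1]"]
      zero[of "vector [1, 1, 0]"] zero[of "vector [1, -1, 0]"] zero[of "vector [1, 0, 1]"]
      zero[of "vector [1, 0, -1]"] zero[of "vector [0, 1, 1]"] zero[of "vector [0, 1, -1]"]
      zero[of "vector [1, 1, 1]"]
    unfolding form by simp_all
  show ?thesis
  proof (intro ext)
    fix i j k :: 3
    show "A i j k = 0"
      using exhaust_3[of i] exhaust_3[of j] exhaust_3[of k]
      by (elim disjE) (simp_all add: canon vals)
  qed
qed

definition chebyshev_tensor :: tensor3 where
  "chebyshev_tensor i j k = (if i = 1 \<and> j = 1 \<and> k = 1 then 1
     else if (i = 1 \<and> j = k \<and> j \<noteq> 1) \<or> (j = 1 \<and> i = k \<and> i \<noteq> 1) \<or> (k = 1 \<and> i = j \<and> i \<noteq> 1)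
     then -1 else 0)"

lemma chebyshev_tensor_sym: "chebyshev_tensor \<in> sym_tensors"
  unfolding sym_tensors_def chebyshev_tensor_def by (simp add: forall_3)

lemma chebyshev_tensor_nonzero: "chebyshev_tensor \<noteq> (\<lambda>i j k. 0)"
  by (metis chebyshev_tensor_def one_neq_zero)

lemma frob_inner_chebyshev_tensor_outer3:
  "frob_inner chebyshev_tensor (outer3 x y z) = x$1*y$1*z$1
     - x$1*y$2*z$2 - x$2*y$1*z$2 - x$2*y$2*z$1 - x$1*y$3*z$3 - x$3*y$1*z$3 - x$3*y$3*z$1"
  unfolding frob_inner_def outer3_def chebyshev_tensor_def by (simp add: sum_3)

lemma frob_norm_chebyshev_tensor: "frob_norm chebyshev_tensor = sqrt 7"
  unfolding frob_norm_def frob_inner_def chebyshev_tensor_def by (simp add: sum_3)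

lemma assoc_sym_tensor_chebyshev33: "assoc_sym_tensor chebyshev33 = chebyshev_tensor"
proof -
  have form: "chebyshev33 x = frob_inner chebyshev_tensor (outer3 x x x)" for x
    unfolding frob_inner_chebyshev_tensor_outer3 chebyshev33_def
    by (simp add: algebra_simps power2_eq_square power3_eq_cube)
  have "A = chebyshev_tensor"
    if "A \<in> sym_tensors" "\<forall>x. chebyshev33 x = frob_inner A (outer3 x x x)" for A
  proof -
    have "(\<lambda>i j k. A i j k - chebyshev_tensor i j k) = (\<lambda>i j k. 0)"
      using that chebyshev_tensor_sym form
      by (intro sym_tensor_eq_zero_if_cubic_form_zero) (auto simp: sym_tensors_def frob_inner_diff_left)
    then show ?thesis by (auto simp: fun_eq_iff)
  qed
  then show ?thesis
    unfolding assoc_sym_tensor_def using chebyshev_tensor_sym form by (intro the_equality) auto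
qed

text \<open>With \<open>v = (x\<^sub>1y\<^sub>1 - x\<^sub>2y\<^sub>2 - x\<^sub>3y\<^sub>3, -(x\<^sub>1y\<^sub>2 + x\<^sub>2y\<^sub>1), -(x\<^sub>1y\<^sub>3 + x\<^sub>3y\<^sub>1))\<close>
  the trilinear form is \<open>v \<bullet> z\<close>, and \<open>\<parallel>x\<parallel>\<^sup>2\<parallel>y\<parallel>\<^sup>2 = \<parallel>v\<parallel>\<^sup>2 + (x\<^sub>2y\<^sub>3 - x\<^sub>3y\<^sub>2)\<^sup>2\<close>.\<close>
lemma chebyshev_trilinear_sq_le:
  fixes x1 x2 x3 y1 y2 y3 z1 z2 z3 :: real
  shows "(x1*y1*z1 - x1*y2*z2 - x2*y1*z2 - x2*y2*z1 - x1*y3*z3 - x3*y1*z3 - x3*y3*z1)\<^sup>2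
    \<le> (x1\<^sup>2 + x2\<^sup>2 + x3\<^sup>2) * (y1\<^sup>2 + y2\<^sup>2 + y3\<^sup>2) * (z1\<^sup>2 + z2\<^sup>2 + z3\<^sup>2)"
proof -
  define v1 where "v1 = x1*y1 - x2*y2 - x3*y3"
  define v2 where "v2 = -(x1*y2 + x2*y1)"
  define v3 where "v3 = -(x1*y3 + x3*y1)"
  have "(x1\<^sup>2 + x2\<^sup>2 + x3\<^sup>2) * (y1\<^sup>2 + y2\<^sup>2 + y3\<^sup>2) * (z1\<^sup>2 + z2\<^sup>2 + z3\<^sup>2)
      - (x1*y1*z1 - x1*y2*z2 - x2*y1*z2 - x2*y2*z1 - x1*y3*z3 - x3*y1*z3 - x3*y3*z1)\<^sup>2
    = (x2*y3 - x3*y2)\<^sup>2 * (z1\<^sup>2 + z2\<^sup>2 + z3\<^sup>2)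
      + (v1*z2 - v2*z1)\<^sup>2 + (v1*z3 - v3*z1)\<^sup>2 + (v2*z3 - v3*z2)\<^sup>2"
    unfolding v1_def v2_def v3_def by algebra
  moreover have "0 \<le> (x2*y3 - x3*y2)\<^sup>2 * (z1\<^sup>2 + z2\<^sup>2 + z3\<^sup>2)
      + (v1*z2 - v2*z1)\<^sup>2 + (v1*z3 - v3*z1)\<^sup>2 + (v2*z3 - v3*z2)\<^sup>2"
    by (intro add_nonneg_nonneg mult_nonneg_nonneg) auto
  ultimately show ?thesis by linarith
qed

lemma spec_norm_chebyshev_tensor: "spec_norm chebyshev_tensor = 1"
proof (rule antisym)
  have sq: "(x$1)\<^sup>2 + (x$2)\<^sup>2 + (x$3)\<^sup>2 = 1" if "norm x = 1" for x :: "real^3"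
    using that by (simp add: norm_eq_1 inner_vec_def sum_3 power2_eq_square)
  show "spec_norm chebyshev_tensor \<le> 1"
  proof (rule spec_norm_le)
    fix x y z :: "real^3" assume "norm x = 1" "norm y = 1" "norm z = 1"
    then have "(frob_inner chebyshev_tensor (outer3 x y z))\<^sup>2 \<le> 1"
      using chebyshev_trilinear_sq_le[of "x$1" "y$1" "z$1" "y$2" "z$2" "x$2" "y$3" "z$3" "x$3"]
      unfolding frob_inner_chebyshev_tensor_outer3 by (simp add: sq)
    then show "frob_inner chebyshev_tensor (outer3 x y z) \<le> 1"
      by (simp add: abs_square_le_1 abs_le_iff)
  qed
  have "frob_inner chebyshev_tensor (outer3 (axis 1 1) (axis 1 1) (axis 1 1))
      \<le> spec_norm chebyshev_tensor"
    by (rule spec_norm_ge) auto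
  then show "1 \<le> spec_norm chebyshev_tensor"
    unfolding frob_inner_chebyshev_tensor_outer3 by (simp add: axis_def)
qed

lemma chebyshev_tensor_ratio: "spec_norm chebyshev_tensor / frob_norm chebyshev_tensor = 1 / sqrt 7"
  by (simp add: spec_norm_chebyshev_tensor frob_norm_chebyshev_tensor)

lemma approx_ratio_eq_inverse_sqrt_7: "chebyshev_tensor \<in> V \<Longrightarrow> approx_ratio V = 1 / sqrt 7"
  unfolding approx_ratio_def
  using chebyshev_tensor_ratio chebyshev_tensor_nonzero ratio_ge_inverse_sqrt_7
  by (intro cInf_eq_minimum) (auto, metis)

lemma orth_rank_chebyshev_tensor: "orth_rank chebyshev_tensor = 7"
proof -
  have "sqrt 7 \<le> sqrt (real (orth_rank chebyshev_tensor))"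
    using frob_norm_le_sqrt_orth_rank[of chebyshev_tensor]
    by (simp add: spec_norm_chebyshev_tensor frob_norm_chebyshev_tensor)
  then show ?thesis using orth_rank_le_7[of chebyshev_tensor] by simp
qed

lemma max_orth_rank: "Max (range orth_rank) = 7"
proof (rule Max_eqI)
  show "finite (range orth_rank)"
    by (rule finite_subset[of _ "{..7}"]) (auto simp: orth_rank_le_7)
  show "y \<le> 7" if "y \<in> range orth_rank" for y
    using that orth_rank_le_7 by auto
  show "7 \<in> range orth_rank"
    using orth_rank_chebyshev_tensor by (metis rangeI)
qed

theorem corollary1p5:
  shows "approx_ratio UNIV = approx_ratio sym_tensors
       \<and> approx_ratio sym_tensors = 1 / sqrt (real (Max (range orth_rank)))
       \<and> 1 / sqrt (real (Max (range orth_rank))) = 1 / sqrt 7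
       \<and> extremal_in UNIV (assoc_sym_tensor chebyshev33)
       \<and> extremal_in sym_tensors (assoc_sym_tensor chebyshev33)"
  using approx_ratio_eq_inverse_sqrt_7[of UNIV] approx_ratio_eq_inverse_sqrt_7[of sym_tensors]
    chebyshev_tensor_sym chebyshev_tensor_nonzero chebyshev_tensor_ratio max_orth_rank
  by (simp add: extremal_in_def assoc_sym_tensor_chebyshev33)

end
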